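(* Let $\mathscr{H}$ be a complex Hilbert space, $N(\cdot)$ a norm on $\mathbb{B}(\mathscr{H})$, and $B,C\in\mathbb{B}(\mathscr{H})$. Then (a) $w_{(N,e)}(B,C)\geq\max\{w_N(B),w_N(C)\}$; (b) $w_{(N,e)}(B,C)\leq\sqrt{w_N^2(B)+w_N^2(C)}$.
   Context: For $T\in\mathbb{B}(\mathscr{H})$: $\Re(T)=\frac12(T+T^* )$ and $w_N(T)=\sup_{\theta\in\mathbb{R}}N(\Re(e^{i\theta}T))$. For $B,C\in\mathbb{B}(\mathscr{H})$, $w_{(N,e)}(B,C)=\sup_{\lambda_1,\lambda_2\in\mathbb{C},\ |\lambda_1|^2+|\lambda_2|^2\leq 1}\sup_{\theta\in\mathbb{R}} N(\Re(e^{i\theta}(\lambda_1B+\lambda_2C)))$. *)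

theory Defs
  imports "HOL-Analysis.Analysis"
begin

class complex_vector = real_vector +
  fixes scaleC :: "complex \<Rightarrow> 'a \<Rightarrow> 'a" (infixr "*\<^sub>C" 75)
  assumes scaleC_add_right: "a *\<^sub>C (x + y) = a *\<^sub>C x + a *\<^sub>C y"
    and scaleC_add_left: "(a + b) *\<^sub>C x = a *\<^sub>C x + b *\<^sub>C x"
    and scaleC_scaleC: "a *\<^sub>C (b *\<^sub>C x) = (a * b) *\<^sub>C x"
    and scaleC_one: "1 *\<^sub>C x = x"
    and scaleR_scaleC: "scaleR r x = complex_of_real r *\<^sub>C x"

class complex_inner = complex_vector + real_normed_vector +
  fixes cinner :: "'a \<Rightarrow> 'a \<Rightarrow> complex"
  assumes cinner_commute: "cinner x y = cnj (cinner y x)"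
    and cinner_add_left: "cinner (x + y) z = cinner x z + cinner y z"
    and cinner_scaleC_left: "cinner (r *\<^sub>C x) y = cnj r * cinner x y"
    and cinner_ge_zero: "0 \<le> Re (cinner x x)"
    and cinner_eq_zero_iff: "cinner x x = 0 \<longleftrightarrow> x = 0"
    and norm_eq_sqrt_cinner: "norm x = sqrt (Re (cinner x x))"

class chilbert_space = complex_inner + complete_space

definition clinear :: "('a::complex_vector \<Rightarrow> 'b::complex_vector) \<Rightarrow> bool" where
  "clinear f \<longleftrightarrow> (\<forall>x y. f (x + y) = f x + f y) \<and> (\<forall>c x. f (c *\<^sub>C x) = c *\<^sub>C f x)"

definition bounded_clinear :: "('a::complex_inner \<Rightarrow> 'b::complex_inner) \<Rightarrow> bool" where
  "bounded_clinear f \<longleftrightarrow> clinear f \<and> (\<exists>K. \<forall>x. norm (f x) \<le> norm x * K)"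

definition BH :: "('a::complex_inner \<Rightarrow> 'a) set" where
  "BH = {T. bounded_clinear T}"

definition cadjoint :: "('a::complex_inner \<Rightarrow> 'a) \<Rightarrow> ('a \<Rightarrow> 'a)" where
  "cadjoint T = (SOME S. \<forall>x y. cinner (T x) y = cinner x (S y))"

definition ReOp :: "('a::complex_inner \<Rightarrow> 'a) \<Rightarrow> ('a \<Rightarrow> 'a)" where
  "ReOp T = (\<lambda>x. (1/2) *\<^sub>C (T x + cadjoint T x))"

definition is_norm_on_BH :: "(('a::complex_inner \<Rightarrow> 'a) \<Rightarrow> real) \<Rightarrow> bool" where
  "is_norm_on_BH N \<longleftrightarrow>
     (\<forall>T\<in>BH. 0 \<le> N T) \<and>
     (\<forall>T\<in>BH. N T = 0 \<longleftrightarrow> T = (\<lambda>_. 0)) \<and>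
     (\<forall>c. \<forall>T\<in>BH. N (\<lambda>x. c *\<^sub>C T x) = cmod c * N T) \<and>
     (\<forall>S\<in>BH. \<forall>T\<in>BH. N (\<lambda>x. S x + T x) \<le> N S + N T)"

definition wN :: "(('a::complex_inner \<Rightarrow> 'a) \<Rightarrow> real) \<Rightarrow> ('a \<Rightarrow> 'a) \<Rightarrow> real" where
  "wN N T = (SUP \<theta>::real. N (ReOp (\<lambda>x. exp (\<i> * complex_of_real \<theta>) *\<^sub>C T x)))"

definition wNe :: "(('a::complex_inner \<Rightarrow> 'a) \<Rightarrow> real) \<Rightarrow> ('a \<Rightarrow> 'a) \<Rightarrow> ('a \<Rightarrow> 'a) \<Rightarrow> real" where
  "wNe N B C = (SUP l \<in> {(l1, l2). (cmod l1)\<^sup>2 + (cmod l2)\<^sup>2 \<le> 1}.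
     SUP \<theta>::real. N (ReOp (\<lambda>x. exp (\<i> * complex_of_real \<theta>) *\<^sub>C
                              (fst l *\<^sub>C B x + snd l *\<^sub>C C x))))"

end

theory Submission
  imports Defs
begin

text \<open>
  Both bounds rest on two facts: \<open>Re(\<cdot>)\<close> is real-linear on \<open>B(H)\<close>, and
  \<open>N(Re(c T)) \<le> |c| w\<^sub>N(T)\<close> for every complex \<open>c\<close> (write \<open>c = |c| exp(i arg c)\<close>).
  The lower bound comes from the coefficient pairs \<open>(1,0)\<close> and \<open>(0,1)\<close>. For the upper bound,
  \<open>Re(exp(i\<theta>)(\<lambda>\<^sub>1B + \<lambda>\<^sub>2C)) = Re(exp(i\<theta>)\<lambda>\<^sub>1B) + Re(exp(i\<theta>)\<lambda>\<^sub>2C)\<close>, so its \<open>N\<close>-norm is at most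
  \<open>|\<lambda>\<^sub>1| w\<^sub>N(B) + |\<lambda>\<^sub>2| w\<^sub>N(C) \<le> sqrt(w\<^sub>N(B)\<^sup>2 + w\<^sub>N(C)\<^sup>2)\<close> by Cauchy-Schwarz in \<open>\<real>\<^sup>2\<close>;
  the same estimates show that all suprema involved are finite.

  Linearity of \<open>Re(\<cdot>)\<close> needs adjoints to exist, and this is where completeness of \<open>H\<close> enters:
  the adjoint comes from the Riesz representation theorem, which in turn rests on the existence
  of a point of minimal norm in a nonempty closed convex subset of a Hilbert space.
\<close>

lemma scaleC_zero_left [simp]: "(0::complex) *\<^sub>C (x::'a::complex_vector) = 0"
  using scaleR_scaleC[of 0 x] by simp

lemma scaleC_of_real: "complex_of_real r *\<^sub>C (x::'a::complex_vector) = r *\<^sub>R x"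
  by (simp add: scaleR_scaleC)

lemma scaleC_zero_right [simp]: "a *\<^sub>C (0::'a::complex_vector) = 0"
  by (metis scaleC_scaleC scaleC_zero_left mult_zero_right)

lemma cinner_add_right: "cinner (x::'a::complex_inner) (y + z) = cinner x y + cinner x z"
  by (metis cinner_commute cinner_add_left complex_cnj_add)

lemma cinner_scaleC_right: "cinner (x::'a::complex_inner) (r *\<^sub>C y) = r * cinner x y"
  by (metis cinner_commute cinner_scaleC_left complex_cnj_mult complex_cnj_cnj)

lemma cinner_zero_right [simp]: "cinner (x::'a::complex_inner) 0 = 0"
  using cinner_scaleC_right[of x 0 0] by simp

lemma cinner_diff_right: "cinner (x::'a::complex_inner) (y - z) = cinner x y - cinner x z"
  using cinner_add_right[of x "y - z" z] by (simp add: eq_diff_eq)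

lemma cinner_diff_left: "cinner (x - y::'a::complex_inner) z = cinner x z - cinner y z"
  using cinner_add_left[of "x - y" y z] by (simp add: eq_diff_eq)

lemma cinner_self: "cinner (x::'a::complex_inner) x = complex_of_real ((norm x)\<^sup>2)"
proof -
  have "Im (cinner x x) = 0"
    using cinner_commute[of x x] by (metis cnj.simps(2) neg_equal_zero)
  moreover have "Re (cinner x x) = (norm x)\<^sup>2"
    using norm_eq_sqrt_cinner[of x] cinner_ge_zero[of x] by simp
  ultimately show ?thesis by (simp add: complex_eq_iff)
qed

lemma cinner_ext: "(\<And>x. cinner x u = cinner x v) \<Longrightarrow> u = (v::'a::complex_inner)"
  using cinner_eq_zero_iff[of "u - v"] by (simp add: cinner_diff_right)

lemma norm_scaleC: "norm (c *\<^sub>C (x::'a::complex_inner)) = cmod c * norm x"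
proof -
  have "complex_of_real ((norm (c *\<^sub>C x))\<^sup>2) = cnj c * c * complex_of_real ((norm x)\<^sup>2)"
    by (metis cinner_self cinner_scaleC_left cinner_scaleC_right mult.assoc)
  also have "\<dots> = complex_of_real ((cmod c * norm x)\<^sup>2)"
    by (simp add: complex_norm_square[symmetric] mult.commute power_mult_distrib)
  finally have "(norm (c *\<^sub>C x))\<^sup>2 = (cmod c * norm x)\<^sup>2"
    using of_real_eq_iff by blast
  then show ?thesis
    by simp
qed

lemma norm_add_square:
  "(norm (x + y::'a::complex_inner))\<^sup>2 = (norm x)\<^sup>2 + (norm y)\<^sup>2 + 2 * Re (cinner x y)"
proof -
  have "cinner (x + y) (x + y) = cinner x x + cinner y y + (cinner x y + cnj (cinner x y))"
    by (simp add: cinner_add_left cinner_add_right cinner_commute[of y x])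
  then have "Re (cinner (x + y) (x + y)) = Re (cinner x x) + Re (cinner y y) + 2 * Re (cinner x y)"
    by (simp add: complex_add_cnj)
  then show ?thesis
    by (simp add: cinner_self)
qed

lemma parallelogram_law:
  "(norm (x + y::'a::complex_inner))\<^sup>2 + (norm (x - y))\<^sup>2 = 2 * (norm x)\<^sup>2 + 2 * (norm y)\<^sup>2"
  using norm_add_square[of x y] norm_add_square[of x "- y"]
  by (simp add: cinner_diff_right[of x 0 y, simplified])

lemma cauchy_schwarz_cinner: "cmod (cinner x y) \<le> norm (x::'a::complex_inner) * norm y"
proof (cases "y = 0")
  case True
  then show ?thesis by simp
next
  case False
  define c where "c = cinner y x"
  define n where "n = (norm y)\<^sup>2"
  have "n > 0" using False by (simp add: n_def)
  define v where "v = complex_of_real n *\<^sub>C x - c *\<^sub>C y"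
  have "cinner v v = complex_of_real n * (complex_of_real n * cinner x x - c * cnj c)"
    unfolding v_def
    by (simp add: cinner_diff_left cinner_diff_right cinner_scaleC_left cinner_scaleC_right
        cinner_commute[of x y] c_def[symmetric] cinner_self[of y] n_def algebra_simps)
  then have "complex_of_real ((norm v)\<^sup>2) = complex_of_real (n * (n * (norm x)\<^sup>2 - (cmod c)\<^sup>2))"
    by (simp add: cinner_self complex_norm_square[symmetric])
  then have "0 \<le> n * (n * (norm x)\<^sup>2 - (cmod c)\<^sup>2)"
    by (metis of_real_eq_iff zero_le_power2)
  then have "(cmod c)\<^sup>2 \<le> (norm x * norm y)\<^sup>2"
    using \<open>n > 0\<close> by (simp add: zero_le_mult_iff n_def power_mult_distrib mult.commute)
  then show ?thesis
    by (metis c_def cinner_commute complex_mod_cnj norm_ge_zero power2_le_imp_le zero_le_mult_iff)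
qed

section \<open>The Riesz representation theorem\<close>

lemma exists_min_norm:
  fixes A :: "'a::chilbert_space set"
  assumes "closed A" and "convex A" and "A \<noteq> {}"
  shows "\<exists>z\<in>A. \<forall>w\<in>A. norm z \<le> norm w"
proof -
  define d where "d = Inf ((\<lambda>x. (norm x)\<^sup>2) ` A)"
  have bdd: "bdd_below ((\<lambda>x. (norm x)\<^sup>2) ` A)"
    by (rule bdd_belowI[of _ 0]) auto
  have d_le: "d \<le> (norm w)\<^sup>2" if "w \<in> A" for w
    unfolding d_def using bdd that by (simp add: cInf_lower)
  have "\<exists>x\<in>A. (norm x)\<^sup>2 < d + inverse (real (Suc n))" for n
    using cInf_less_iff[OF _ bdd, of "d + inverse (real (Suc n))"] \<open>A \<noteq> {}\<close>
    by (simp add: d_def)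
  then obtain X where X_in: "\<And>n. X n \<in> A"
    and X_small: "\<And>n. (norm (X n))\<^sup>2 < d + inverse (real (Suc n))"
    by metis
  have midpoint: "4 * d \<le> (norm (X m + X n))\<^sup>2" for m n
  proof -
    have "(1/2) *\<^sub>R X m + (1 - 1/2) *\<^sub>R X n \<in> A"
      using \<open>convex A\<close> X_in by (intro convexD) auto
    then have "d \<le> (norm ((1/2) *\<^sub>R (X m + X n)))\<^sup>2"
      by (intro d_le) (simp add: scaleR_add_right)
    then show ?thesis
      by (simp add: power_mult_distrib power2_eq_square)
  qed
  have X_close: "(norm (X m - X n))\<^sup>2 < 2 * inverse (real (Suc m)) + 2 * inverse (real (Suc n))"
    for m n
    using parallelogram_law[of "X m" "X n"] midpoint[of m n] X_small[of m] X_small[of n]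
    by linarith
  have "Cauchy X"
  proof (rule metric_CauchyI)
    fix e :: real
    assume "0 < e"
    then obtain M where "M \<noteq> 0" and M: "inverse (real M) < e\<^sup>2 / 4"
      using real_arch_inverse[of "e\<^sup>2 / 4"] by auto
    have "dist (X m) (X n) < e" if "M \<le> m" "M \<le> n" for m n
    proof -
      have "inverse (real (Suc k)) \<le> inverse (real M)" if "M \<le> k" for k
        using \<open>M \<noteq> 0\<close> that by (simp add: le_imp_inverse_le)
      then have "inverse (real (Suc m)) \<le> inverse (real M)" "inverse (real (Suc n)) \<le> inverse (real M)"
        using that by auto
      then have "(norm (X m - X n))\<^sup>2 < e\<^sup>2"
        using X_close[of m n] M by linarith
      then show ?thesis
        using \<open>0 < e\<close> by (simp add: dist_norm power_less_imp_less_base)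
    qed
    then show "\<exists>M. \<forall>m\<ge>M. \<forall>n\<ge>M. dist (X m) (X n) < e"
      by blast
  qed
  then obtain z where z: "X \<longlonglongrightarrow> z"
    using Cauchy_convergent_iff convergent_def by blast
  have "z \<in> A"
    using \<open>closed A\<close> X_in z closed_sequentially by blast
  have "(norm z)\<^sup>2 \<le> d"
  proof (rule LIMSEQ_le[of "\<lambda>n. (norm (X n))\<^sup>2" _ "\<lambda>n. d + inverse (real (Suc n))"])
    show "(\<lambda>n. (norm (X n))\<^sup>2) \<longlonglongrightarrow> (norm z)\<^sup>2"
      by (intro tendsto_intros z)
    show "(\<lambda>n. d + inverse (real (Suc n))) \<longlonglongrightarrow> d"
      by (rule LIMSEQ_inverse_real_of_nat_add)
    show "\<exists>N. \<forall>n\<ge>N. (norm (X n))\<^sup>2 \<le> d + inverse (real (Suc n))"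
      using X_small less_imp_le by blast
  qed
  then have "\<forall>w\<in>A. norm z \<le> norm w"
    using d_le by (meson norm_ge_zero order_trans power2_le_imp_le)
  with \<open>z \<in> A\<close> show ?thesis
    by blast
qed

lemma min_norm_orthogonal:
  fixes z k :: "'a::complex_inner"
  assumes "\<And>t. norm z \<le> norm (z + t *\<^sub>C k)"
  shows "cinner z k = 0"
proof (cases "k = 0")
  case True
  then show ?thesis by simp
next
  case False
  then have "norm k > 0"
    by simp
  define c where "c = cinner z k"
  \<comment> \<open>\<open>z + t k\<close> is \<open>z\<close> minus its orthogonal projection onto \<open>k\<close>\<close>
  define t where "t = - cnj c / complex_of_real ((norm k)\<^sup>2)"
  have "(norm z)\<^sup>2 \<le> (norm (z + t *\<^sub>C k))\<^sup>2"
    using assms[of t] by simp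
  also have "\<dots> = (norm z)\<^sup>2 + (cmod t * norm k)\<^sup>2 + 2 * Re (t * c)"
    by (simp add: norm_add_square norm_scaleC cinner_scaleC_right c_def)
  also have "cmod t = cmod c / (norm k)\<^sup>2"
    by (simp add: t_def norm_divide norm_power)
  also have "(cmod c / (norm k)\<^sup>2 * norm k)\<^sup>2 = (cmod c)\<^sup>2 / (norm k)\<^sup>2"
    using \<open>norm k > 0\<close> by (simp add: field_simps power2_eq_square)
  also have "t * c = - complex_of_real ((cmod c)\<^sup>2 / (norm k)\<^sup>2)"
    by (simp add: t_def complex_norm_square[symmetric] mult.commute)
  finally have "(cmod c)\<^sup>2 / (norm k)\<^sup>2 \<le> 0"
    by simp
  then show ?thesis
    using \<open>norm k > 0\<close> by (simp add: c_def divide_le_0_iff)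
qed

theorem riesz_representation:
  fixes f :: "'a::chilbert_space \<Rightarrow> complex"
  assumes f_add: "\<And>x y. f (x + y) = f x + f y"
    and f_scaleC: "\<And>c x. f (c *\<^sub>C x) = c * f x"
    and f_bound: "\<And>x. cmod (f x) \<le> norm x * K"
  shows "\<exists>w. \<forall>x. f x = cinner w x"
proof (cases "\<forall>x. f x = 0")
  case True
  then show ?thesis
    by (metis cinner_commute cinner_zero_right complex_cnj_zero)
next
  case False
  then obtain x0 where "f x0 \<noteq> 0"
    by blast
  have f_scaleR: "f (r *\<^sub>R x) = r *\<^sub>R f x" for r x
    using f_scaleC[of "complex_of_real r" x] by (simp add: scaleC_of_real scaleR_conv_of_real)
  have "bounded_linear f"
    by (rule bounded_linear_intro[of f K]) (use f_add f_scaleR f_bound in auto)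
  define A where "A = {x. f x = 1}"
  have "closed A"
    unfolding A_def using \<open>bounded_linear f\<close>
    by (intro closed_Collect_eq continuous_on_const linear_continuous_on)
  have "convex A"
    unfolding A_def
    by (rule convexI) (simp add: f_add f_scaleR scaleR_add_left[symmetric])
  have "inverse (f x0) *\<^sub>C x0 \<in> A"
    using \<open>f x0 \<noteq> 0\<close> by (simp add: A_def f_scaleC)
  then obtain z where "z \<in> A" and z_min: "\<And>w. w \<in> A \<Longrightarrow> norm z \<le> norm w"
    using exists_min_norm[OF \<open>closed A\<close> \<open>convex A\<close>] by blast
  have "f z = 1"
    using \<open>z \<in> A\<close> by (simp add: A_def)
  have kernel_orth: "cinner z k = 0" if "f k = 0" for k
    by (rule min_norm_orthogonal) (use that \<open>f z = 1\<close> in \<open>simp add: z_min A_def f_add f_scaleC\<close>)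
  have "z \<noteq> 0"
    using \<open>f z = 1\<close> f_scaleC[of 0 0] by auto
  have "cinner z x = f x * complex_of_real ((norm z)\<^sup>2)" for x
  proof -
    have "f (x - f x *\<^sub>C z) = 0"
      using f_add[of "x - f x *\<^sub>C z" "f x *\<^sub>C z"] by (simp add: f_scaleC \<open>f z = 1\<close>)
    then have "cinner z (x - f x *\<^sub>C z) = 0"
      by (rule kernel_orth)
    then show ?thesis
      by (simp add: cinner_diff_right cinner_scaleC_right cinner_self)
  qed
  then have "f x = cinner (complex_of_real (inverse ((norm z)\<^sup>2)) *\<^sub>C z) x" for x
    using \<open>z \<noteq> 0\<close> by (simp add: cinner_scaleC_left)
  then show ?thesis
    by blast
qed

section \<open>Bounded operators and their adjoints\<close>

lemma BH_D:
  assumes "T \<in> BH"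
  shows BH_D_add: "T (x + y) = T x + T y"
    and BH_D_scaleC: "T (c *\<^sub>C x) = c *\<^sub>C T x"
    and BH_D_bound: "\<exists>K\<ge>0. \<forall>x. norm (T x) \<le> norm x * K"
proof -
  show "T (x + y) = T x + T y" "T (c *\<^sub>C x) = c *\<^sub>C T x"
    using assms by (simp_all add: BH_def bounded_clinear_def clinear_def)
  obtain K where "\<forall>x. norm (T x) \<le> norm x * K"
    using assms by (auto simp: BH_def bounded_clinear_def)
  then have "\<forall>x. norm (T x) \<le> norm x * \<bar>K\<bar>"
    by (meson abs_ge_self mult_left_mono norm_ge_zero order_trans)
  then show "\<exists>K\<ge>0. \<forall>x. norm (T x) \<le> norm x * K"
    by (intro exI[of _ "\<bar>K\<bar>"]) simp
qed

lemma BH_I: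
  assumes "\<And>x y. T (x + y) = T x + T y" and "\<And>c x. T (c *\<^sub>C x) = c *\<^sub>C T x"
    and "\<And>x. norm (T x) \<le> norm x * K"
  shows "T \<in> BH"
  using assms by (auto simp: BH_def bounded_clinear_def clinear_def)

lemma BH_add:
  assumes S: "S \<in> BH" and T: "T \<in> BH"
  shows "(\<lambda>x. S x + T x) \<in> BH"
proof -
  obtain K L where K: "\<forall>x. norm (S x) \<le> norm x * K" and L: "\<forall>x. norm (T x) \<le> norm x * L"
    using BH_D_bound[OF S] BH_D_bound[OF T] by blast
  show ?thesis
  proof (rule BH_I[where K = "K + L"])
    show "norm (S x + T x) \<le> norm x * (K + L)" for x
      using norm_triangle_ineq[of "S x" "T x"] K L by (smt (verit) distrib_left)
  qed (simp_all add: BH_D_add[OF S] BH_D_add[OF T] BH_D_scaleC[OF S] BH_D_scaleC[OF T]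
      scaleC_add_right ac_simps)
qed

lemma BH_scaleC:
  assumes T: "T \<in> BH"
  shows "(\<lambda>x. c *\<^sub>C T x) \<in> BH"
proof -
  obtain K where K: "\<forall>x. norm (T x) \<le> norm x * K"
    using BH_D_bound[OF T] by blast
  show ?thesis
  proof (rule BH_I[where K = "cmod c * K"])
    show "norm (c *\<^sub>C T x) \<le> norm x * (cmod c * K)" for x
      using mult_left_mono[OF K[rule_format, of x] norm_ge_zero[of c]]
      by (simp add: norm_scaleC ac_simps)
  qed (simp_all add: BH_D_add[OF T] BH_D_scaleC[OF T] scaleC_add_right scaleC_scaleC mult.commute)
qed

lemma cadjoint_cinner:
  fixes T :: "'a::chilbert_space \<Rightarrow> 'a"
  assumes T: "T \<in> BH"
  shows "cinner (T x) y = cinner x (cadjoint T y)"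
proof -
  obtain K where K: "\<forall>x. norm (T x) \<le> norm x * K"
    using BH_D_bound[OF T] by blast
  have "\<exists>w. \<forall>x. cinner y (T x) = cinner w x" for y
  proof (rule riesz_representation[where K = "norm y * K"])
    show "cmod (cinner y (T x)) \<le> norm x * (norm y * K)" for x
      using cauchy_schwarz_cinner[of y "T x"] K mult_left_mono[of _ _ "norm y"]
      by (smt (verit, best) mult.left_commute norm_ge_zero)
  qed (simp_all add: BH_D_add[OF T] BH_D_scaleC[OF T] cinner_add_right cinner_scaleC_right)
  then obtain S where "\<And>x y. cinner y (T x) = cinner (S y) x"
    by metis
  then have "\<exists>S. \<forall>x y. cinner (T x) y = cinner x (S y)"
    by (metis cinner_commute)
  then have "\<forall>x y. cinner (T x) y = cinner x (cadjoint T y)"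
    unfolding cadjoint_def by (rule someI_ex)
  then show ?thesis
    by blast
qed

lemma cadjoint_add:
  fixes S T :: "'a::chilbert_space \<Rightarrow> 'a"
  assumes S: "S \<in> BH" and T: "T \<in> BH"
  shows "cadjoint (\<lambda>x. S x + T x) y = cadjoint S y + cadjoint T y"
  by (rule cinner_ext) (simp add: cadjoint_cinner[OF BH_add[OF S T], symmetric] cinner_add_left
      cinner_add_right cadjoint_cinner[OF S] cadjoint_cinner[OF T])

lemma cadjoint_scaleC:
  fixes T :: "'a::chilbert_space \<Rightarrow> 'a"
  assumes T: "T \<in> BH"
  shows "cadjoint (\<lambda>x. c *\<^sub>C T x) y = cnj c *\<^sub>C cadjoint T y"
  by (rule cinner_ext) (simp add: cadjoint_cinner[OF BH_scaleC[OF T], symmetric]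
      cinner_scaleC_left cinner_scaleC_right cadjoint_cinner[OF T])

lemma cadjoint_BH:
  fixes T :: "'a::chilbert_space \<Rightarrow> 'a"
  assumes T: "T \<in> BH"
  shows "cadjoint T \<in> BH"
proof -
  obtain K where "K \<ge> 0" and K: "\<forall>x. norm (T x) \<le> norm x * K"
    using BH_D_bound[OF T] by blast
  show ?thesis
  proof (rule BH_I[where K = K])
    show "cadjoint T (x + y) = cadjoint T x + cadjoint T y" for x y
      by (rule cinner_ext) (simp add: cadjoint_cinner[OF T, symmetric] cinner_add_right)
    show "cadjoint T (c *\<^sub>C x) = c *\<^sub>C cadjoint T x" for c x
      by (rule cinner_ext) (simp add: cadjoint_cinner[OF T, symmetric] cinner_scaleC_right)
    show "norm (cadjoint T y) \<le> norm y * K" for y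
    proof -
      let ?u = "cadjoint T y"
      have "(norm ?u)\<^sup>2 = cmod (cinner (T ?u) y)"
        by (metis cadjoint_cinner[OF T] cinner_self norm_of_real abs_of_nonneg zero_le_power2)
      also have "\<dots> \<le> norm ?u * K * norm y"
        using cauchy_schwarz_cinner[of "T ?u" y] K by (meson mult_right_mono norm_ge_zero order_trans)
      finally have "norm ?u * norm ?u \<le> norm ?u * (norm y * K)"
        by (simp add: power2_eq_square ac_simps)
      then show ?thesis
        using \<open>K \<ge> 0\<close> by (cases "norm ?u = 0") simp_all
    qed
  qed
qed

lemma ReOp_BH:
  fixes T :: "'a::chilbert_space \<Rightarrow> 'a"
  assumes "T \<in> BH"
  shows "ReOp T \<in> BH"
  using assms unfolding ReOp_def by (intro BH_scaleC BH_add cadjoint_BH)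

lemma ReOp_add:
  fixes S T :: "'a::chilbert_space \<Rightarrow> 'a"
  assumes "S \<in> BH" and "T \<in> BH"
  shows "ReOp (\<lambda>x. S x + T x) = (\<lambda>x. ReOp S x + ReOp T x)"
  unfolding ReOp_def using assms
  by (simp add: cadjoint_add scaleC_add_right[symmetric] ac_simps)

lemma ReOp_scaleR:
  fixes T :: "'a::chilbert_space \<Rightarrow> 'a"
  assumes "T \<in> BH"
  shows "ReOp (\<lambda>x. complex_of_real r *\<^sub>C T x) = (\<lambda>x. complex_of_real r *\<^sub>C ReOp T x)"
  unfolding ReOp_def using assms
  by (simp add: cadjoint_scaleC scaleC_add_right scaleC_scaleC mult.commute)

section \<open>Norms of real parts\<close>

lemma mult_add_le_sqrt_sum_squares:
  fixes a b p q :: real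
  assumes "a\<^sup>2 + b\<^sup>2 \<le> 1"
  shows "a * p + b * q \<le> sqrt (p\<^sup>2 + q\<^sup>2)"
proof (rule real_le_rsqrt)
  have "(a * p + b * q)\<^sup>2 \<le> (a\<^sup>2 + b\<^sup>2) * (p\<^sup>2 + q\<^sup>2)"
    using zero_le_power2[of "a * q - b * p"] by (simp add: power2_eq_square algebra_simps)
  also have "\<dots> \<le> p\<^sup>2 + q\<^sup>2"
    using mult_right_mono[OF assms, of "p\<^sup>2 + q\<^sup>2"] by simp
  finally show "(a * p + b * q)\<^sup>2 \<le> p\<^sup>2 + q\<^sup>2" .
qed

context
  fixes N :: "('a::chilbert_space \<Rightarrow> 'a) \<Rightarrow> real"
  assumes N: "is_norm_on_BH N"
begin

lemma N_nonneg: "T \<in> BH \<Longrightarrow> 0 \<le> N T"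
  using N by (simp add: is_norm_on_BH_def)

lemma N_scaleC: "T \<in> BH \<Longrightarrow> N (\<lambda>x. c *\<^sub>C T x) = cmod c * N T"
  using N by (simp add: is_norm_on_BH_def)

lemma N_triangle: "S \<in> BH \<Longrightarrow> T \<in> BH \<Longrightarrow> N (\<lambda>x. S x + T x) \<le> N S + N T"
  using N by (simp add: is_norm_on_BH_def)

lemma N_ReOp_scaleC_le_parts:
  assumes T: "T \<in> BH"
  shows "N (ReOp (\<lambda>x. c *\<^sub>C T x)) \<le> cmod c * (N (ReOp T) + N (ReOp (\<lambda>x. \<i> *\<^sub>C T x)))"
proof -
  have iT: "(\<lambda>x. \<i> *\<^sub>C T x) \<in> BH"
    using T by (rule BH_scaleC)
  have "(\<lambda>x. c *\<^sub>C T x)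
      = (\<lambda>x. complex_of_real (Re c) *\<^sub>C T x + complex_of_real (Im c) *\<^sub>C (\<i> *\<^sub>C T x))"
    by (subst complex_eq[of c]) (simp add: scaleC_add_left scaleC_scaleC mult.commute)
  then have "ReOp (\<lambda>x. c *\<^sub>C T x)
      = (\<lambda>x. complex_of_real (Re c) *\<^sub>C ReOp T x
            + complex_of_real (Im c) *\<^sub>C ReOp (\<lambda>x. \<i> *\<^sub>C T x) x)"
    by (simp add: ReOp_add BH_scaleC T iT ReOp_scaleR)
  then have "N (ReOp (\<lambda>x. c *\<^sub>C T x))
      \<le> N (\<lambda>x. complex_of_real (Re c) *\<^sub>C ReOp T x)
        + N (\<lambda>x. complex_of_real (Im c) *\<^sub>C ReOp (\<lambda>x. \<i> *\<^sub>C T x) x)"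
    by (simp add: N_triangle BH_scaleC ReOp_BH T iT)
  also have "\<dots> = \<bar>Re c\<bar> * N (ReOp T) + \<bar>Im c\<bar> * N (ReOp (\<lambda>x. \<i> *\<^sub>C T x))"
    by (simp add: N_scaleC ReOp_BH T iT)
  also have "\<dots> \<le> cmod c * N (ReOp T) + cmod c * N (ReOp (\<lambda>x. \<i> *\<^sub>C T x))"
    by (intro add_mono mult_right_mono abs_Re_le_cmod abs_Im_le_cmod N_nonneg ReOp_BH T iT)
  finally show ?thesis
    by (simp add: distrib_left)
qed

lemma bdd_above_wN:
  assumes "T \<in> BH"
  shows "bdd_above (range (\<lambda>\<theta>::real. N (ReOp (\<lambda>x. exp (\<i> * complex_of_real \<theta>) *\<^sub>C T x))))"
proof (rule bdd_aboveI2)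
  fix \<theta> :: real
  show "N (ReOp (\<lambda>x. exp (\<i> * complex_of_real \<theta>) *\<^sub>C T x))
      \<le> N (ReOp T) + N (ReOp (\<lambda>x. \<i> *\<^sub>C T x))"
    using N_ReOp_scaleC_le_parts[OF assms, of "exp (\<i> * complex_of_real \<theta>)"]
    by (simp add: norm_exp_i_times)
qed

lemma N_ReOp_scaleC_le_wN:
  assumes T: "T \<in> BH"
  shows "N (ReOp (\<lambda>x. c *\<^sub>C T x)) \<le> cmod c * wN N T"
proof -
  define U where "U = (\<lambda>x. exp (\<i> * complex_of_real (Arg c)) *\<^sub>C T x)"
  have U: "U \<in> BH"
    unfolding U_def using T by (rule BH_scaleC)
  have "(\<lambda>x. c *\<^sub>C T x) = (\<lambda>x. complex_of_real (cmod c) *\<^sub>C U x)"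
    using rcis_cmod_Arg[of c] by (simp add: U_def scaleC_scaleC rcis_def cis_conv_exp)
  then have "N (ReOp (\<lambda>x. c *\<^sub>C T x)) = cmod c * N (ReOp U)"
    by (simp add: ReOp_scaleR[OF U] N_scaleC ReOp_BH[OF U])
  also have "N (ReOp U) \<le> wN N T"
    unfolding wN_def U_def by (rule cSUP_upper[OF UNIV_I bdd_above_wN[OF T]])
  finally show ?thesis
    by (simp add: mult_left_mono)
qed

lemma N_ReOp_combination_le:
  assumes B: "B \<in> BH" and C: "C \<in> BH"
    and "cmod e = 1" and "(cmod l1)\<^sup>2 + (cmod l2)\<^sup>2 \<le> 1"
  shows "N (ReOp (\<lambda>x. e *\<^sub>C (l1 *\<^sub>C B x + l2 *\<^sub>C C x))) \<le> sqrt ((wN N B)\<^sup>2 + (wN N C)\<^sup>2)"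
proof -
  have eB: "(\<lambda>x. (e * l1) *\<^sub>C B x) \<in> BH" and eC: "(\<lambda>x. (e * l2) *\<^sub>C C x) \<in> BH"
    using B C by (simp_all add: BH_scaleC)
  have "(\<lambda>x. e *\<^sub>C (l1 *\<^sub>C B x + l2 *\<^sub>C C x)) = (\<lambda>x. (e * l1) *\<^sub>C B x + (e * l2) *\<^sub>C C x)"
    by (simp add: scaleC_add_right scaleC_scaleC)
  then have "N (ReOp (\<lambda>x. e *\<^sub>C (l1 *\<^sub>C B x + l2 *\<^sub>C C x)))
      \<le> N (ReOp (\<lambda>x. (e * l1) *\<^sub>C B x)) + N (ReOp (\<lambda>x. (e * l2) *\<^sub>C C x))"
    using N_triangle[OF ReOp_BH[OF eB] ReOp_BH[OF eC]] by (simp add: ReOp_add[OF eB eC])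
  also have "\<dots> \<le> cmod l1 * wN N B + cmod l2 * wN N C"
    using N_ReOp_scaleC_le_wN[OF B, of "e * l1"] N_ReOp_scaleC_le_wN[OF C, of "e * l2"]
      \<open>cmod e = 1\<close> by (simp add: norm_mult)
  also have "\<dots> \<le> sqrt ((wN N B)\<^sup>2 + (wN N C)\<^sup>2)"
    using assms(4) by (rule mult_add_le_sqrt_sum_squares)
  finally show ?thesis .
qed

end

theorem theorem2p4:
  fixes N :: "('a::chilbert_space \<Rightarrow> 'a) \<Rightarrow> real"
    and B C :: "'a \<Rightarrow> 'a"
  assumes "is_norm_on_BH N"
    and "B \<in> BH" and "C \<in> BH"
  shows "wNe N B C \<ge> max (wN N B) (wN N C) \<and>
         wNe N B C \<le> sqrt ((wN N B)\<^sup>2 + (wN N C)\<^sup>2)"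
proof -
  define coeffs where "coeffs = {(l1, l2). (cmod l1)\<^sup>2 + (cmod l2)\<^sup>2 \<le> (1::real)}"
  define w where "w = (\<lambda>l. SUP \<theta>::real. N (ReOp (\<lambda>x. exp (\<i> * complex_of_real \<theta>) *\<^sub>C
                              (fst l *\<^sub>C B x + snd l *\<^sub>C C x))))"
  have wNe_eq: "wNe N B C = (SUP l \<in> coeffs. w l)"
    by (simp add: wNe_def coeffs_def w_def)
  have w_le: "w l \<le> sqrt ((wN N B)\<^sup>2 + (wN N C)\<^sup>2)" if "l \<in> coeffs" for l
    unfolding w_def using that
    by (intro cSUP_least N_ReOp_combination_le assms)
      (auto simp: coeffs_def norm_exp_i_times)
  have "(1, 0) \<in> coeffs" "(0, 1) \<in> coeffs"
    by (simp_all add: coeffs_def)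
  moreover have "w (1, 0) = wN N B" "w (0, 1) = wN N C"
    by (simp_all add: w_def wN_def scaleC_one)
  moreover have "bdd_above (w ` coeffs)"
    using w_le by (rule bdd_aboveI2)
  ultimately have "max (wN N B) (wN N C) \<le> wNe N B C"
    unfolding wNe_eq by (metis cSUP_upper max.boundedI)
  moreover have "wNe N B C \<le> sqrt ((wN N B)\<^sup>2 + (wN N C)\<^sup>2)"
    unfolding wNe_eq using w_le \<open>(1, 0) \<in> coeffs\<close> by (intro cSUP_least) auto
  ultimately show ?thesis
    by simp
qed

end
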